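(* Let $M=4Z+3$ with $Z\ge1$ an integer, and let $\gamma\neq0$ and $J$ be real. Consider on the open chain of $M$ sites $$H=\sum_{m=1}^{M-1}\Big(J\, c_{m+1}^\dagger c_m\sigma_{m+1}^+ + \text{h.c.}\Big) - \sum_{m=1}^{M-1}\gamma\Big(c_{m+1}^\dagger c_m + \text{h.c.}\Big).$$ Then the subspace of states with exactly one fermion and spin on site $1$ equal to $|\uparrow\rangle$ contains at least $2^{3Z+1}$ linearly independent states $|\Psi\rangle$ satisfying $H^2|\Psi\rangle=(2\gamma^2+J^2)|\Psi\rangle$, each of which generates a two-dimensional Krylov subspace $\mathrm{span}\{|\Psi\rangle, H|\Psi\rangle\}$ (so the Hamiltonian has at least $2^{3Z+1}$ two-dimensional Krylov subspaces in this sector).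
   Context: Each site carries one spinless fermion mode ($c_m,c_m^\dagger$, canonical anticommutation relations) and one spin-$1/2$ with basis $|\uparrow\rangle=|1\rangle$, $|\downarrow\rangle=|0\rangle$ ($\sigma^z|1\rangle=|1\rangle$); $\sigma_m^+=|1\rangle\langle 0|$ acting on spin $m$ and $\sigma_m^-=(\sigma_m^+)^\dagger$. The Krylov subspace generated by $|\Psi\rangle$ is the span of $\{H^n|\Psi\rangle: n\ge 0\}$. *)

theory Defs
  imports Complex_Main
begin

text \<open>Each site carries one
spinless fermion mode and one spin-1/2. A basis configuration is a pair (F, S):
F = set of occupied fermion sites, S = set of sites whose spin is up (|1>).
A state is a complex coefficient function on configurations (supported on the
valid configurations for M sites). Fermion operators use the standard
Jordan-Wigner ordering by site index.\<close>

type_synonym config = "nat set \<times> nat set"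
type_synonym state = "config \<Rightarrow> complex"

definition configs :: "nat \<Rightarrow> config set" where
  "configs M = Pow {1..M} \<times> Pow {1..M}"

definition lift :: "nat \<Rightarrow> (config \<Rightarrow> (complex \<times> config) option) \<Rightarrow> state \<Rightarrow> state" where
  "lift M f \<psi> = (\<lambda>b'. \<Sum>b\<in>configs M. (case f b of None \<Rightarrow> 0
       | Some (a, b'') \<Rightarrow> (if b'' = b' then a * \<psi> b else 0)))"

definition jw_sign :: "nat set \<Rightarrow> nat \<Rightarrow> complex" where
  "jw_sign F m = (-1) ^ card {k\<in>F. k < m}"

definition ann_b :: "nat \<Rightarrow> config \<Rightarrow> (complex \<times> config) option" where
  "ann_b m b = (case b of (F, S) \<Rightarrow>
     if m \<in> F then Some (jw_sign F m, (F - {m}, S)) else None)"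

definition cre_b :: "nat \<Rightarrow> config \<Rightarrow> (complex \<times> config) option" where
  "cre_b m b = (case b of (F, S) \<Rightarrow>
     if m \<notin> F then Some (jw_sign F m, (insert m F, S)) else None)"

definition sp_b :: "nat \<Rightarrow> config \<Rightarrow> (complex \<times> config) option" where
  "sp_b m b = (case b of (F, S) \<Rightarrow>
     if m \<notin> S then Some (1, (F, insert m S)) else None)"

definition sm_b :: "nat \<Rightarrow> config \<Rightarrow> (complex \<times> config) option" where
  "sm_b m b = (case b of (F, S) \<Rightarrow>
     if m \<in> S then Some (1, (F, S - {m})) else None)"

definition ann :: "nat \<Rightarrow> nat \<Rightarrow> state \<Rightarrow> state" where "ann M m = lift M (ann_b m)"
definition cre :: "nat \<Rightarrow> nat \<Rightarrow> state \<Rightarrow> state" where "cre M m = lift M (cre_b m)"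
definition sigp :: "nat \<Rightarrow> nat \<Rightarrow> state \<Rightarrow> state" where "sigp M m = lift M (sp_b m)"
definition sigm :: "nat \<Rightarrow> nat \<Rightarrow> state \<Rightarrow> state" where "sigm M m = lift M (sm_b m)"

definition Ham :: "nat \<Rightarrow> real \<Rightarrow> real \<Rightarrow> state \<Rightarrow> state" where
  "Ham M J \<gamma> \<psi> = (\<lambda>b. \<Sum>m\<in>{1..M-1}.
      of_real J * (cre M (m+1) (ann M m (sigp M (m+1) \<psi>)) b)
    + of_real J * (sigm M (m+1) (cre M m (ann M (m+1) \<psi>)) b)
    - of_real \<gamma> * (cre M (m+1) (ann M m \<psi>) b + cre M m (ann M (m+1) \<psi>) b))"

definition cspan :: "state set \<Rightarrow> state set" where
  "cspan A = {\<phi>. \<exists>B c. finite B \<and> B \<subseteq> A \<and> \<phi> = (\<lambda>b. \<Sum>v\<in>B. c v * v b)}"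

definition lin_indep :: "state set \<Rightarrow> bool" where
  "lin_indep A = (\<forall>B c. finite B \<and> B \<subseteq> A \<and> (\<lambda>b. \<Sum>v\<in>B. c v * v b) = (\<lambda>_. 0)
       \<longrightarrow> (\<forall>v\<in>B. c v = 0))"

definition krylov :: "(state \<Rightarrow> state) \<Rightarrow> state \<Rightarrow> state set" where
  "krylov H \<psi> = cspan (range (\<lambda>n. (H ^^ n) \<psi>))"

definition sector :: "nat \<Rightarrow> state set" where
  "sector M = {\<psi>. \<forall>F S. \<psi> (F, S) \<noteq> 0 \<longrightarrow> (F, S) \<in> configs M \<and> card F = 1 \<and> 1 \<in> S}"

end

theory Submission
  imports Defs
begin

(* In the one-fermion sector a state is a family of spin wavefunctions Phi q, one for each
   fermion position q, and H acts as nearest-neighbour hopping: a hop onto site j multiplies the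
   spin wavefunction by -gamma + J sigma^+_j, a hop from j to j - 1 by -gamma + J sigma^-_j.
   Put the fermion only on the sites 4k + 2 (k <= Z) and let every Phi (4k + 2) be a product over
   the spin pairs (2i + 2, 2i + 3).  Then H Psi lives on odd positions, and H^2 Psi has two kinds
   of contributions.  At a fermion site 4k + 2 only the pair (4k + 2, 4k + 3) is touched, by a
   two-spin operator with a two-dimensional eigenspace for 2 gamma^2 + J^2.  At the gap site
   4k + 4 the contributions coming from 4k + 2 and 4k + 6 cancel once the factors of the pair
   (4k + 4, 4k + 5) on the two sides are matched, which is possible since -gamma + J sigma^-
   is invertible for gamma ~= 0.  One of two eigenvectors at each of the Z + 1 fermion sites and
   one of four basis states on each of the Z gap pairs give 2^(3Z + 1) states; each has a basis
   coordinate at which all the others vanish, and Psi and H Psi have disjoint supports, so each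
   Krylov space is span {Psi, H Psi} and two-dimensional. *)

lemma finite_configs [simp]: "finite (configs M)"
  by (simp add: configs_def)

lemma mem_configs_iff: "(F, S) \<in> configs M \<longleftrightarrow> F \<subseteq> {1..M} \<and> S \<subseteq> {1..M}"
  by (auto simp: configs_def)

lemma lift_scale: "lift M f (\<lambda>b. c * \<psi> b) = (\<lambda>b. c * lift M f \<psi> b)"
  by (auto simp: lift_def sum_distrib_left intro!: sum.cong split: option.split)

lemma lift_apply:
  assumes "\<And>b a. f b = Some (a, b') \<Longrightarrow> b = src"
  shows "lift M f \<psi> b' = (if src \<in> configs M then
    (case f src of None \<Rightarrow> 0 | Some (a, b'') \<Rightarrow> if b'' = b' then a * \<psi> src else 0) else 0)"
proof -
  let ?t = "\<lambda>b. case f b of None \<Rightarrow> 0 | Some (a, b'') \<Rightarrow> if b'' = b' then a * \<psi> b else 0"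
  have eq: "?t = (\<lambda>b. if b = src then ?t src else 0)"
  proof
    fix b
    show "?t b = (if b = src then ?t src else 0)"
    proof (cases "f b")
      case (Some p)
      then obtain a c where "f b = Some (a, c)" by (cases p) auto
      then show ?thesis using assms[of b a] by auto
    qed auto
  qed
  show ?thesis
    unfolding lift_def eq by (simp only: sum.delta finite_configs)
qed

lemma ann_apply: "ann M m \<psi> (F, S) = (if m \<notin> F \<and> (insert m F, S) \<in> configs M
    then jw_sign (insert m F) m * \<psi> (insert m F, S) else 0)"
  unfolding ann_def
  by (subst lift_apply[where src = "(insert m F, S)"]) (auto simp: ann_b_def split: if_splits)

lemma cre_apply: "cre M m \<psi> (F, S) = (if m \<in> F \<and> (F - {m}, S) \<in> configs M
    then jw_sign (F - {m}) m * \<psi> (F - {m}, S) else 0)"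
  unfolding cre_def
  by (subst lift_apply[where src = "(F - {m}, S)"]) (auto simp: cre_b_def split: if_splits)

lemma sigp_apply: "sigp M m \<psi> (F, S) = (if m \<in> S \<and> (F, S - {m}) \<in> configs M
    then \<psi> (F, S - {m}) else 0)"
  unfolding sigp_def
  by (subst lift_apply[where src = "(F, S - {m})"]) (auto simp: sp_b_def split: if_splits)

lemma sigm_apply: "sigm M m \<psi> (F, S) = (if m \<notin> S \<and> (F, insert m S) \<in> configs M
    then \<psi> (F, insert m S) else 0)"
  unfolding sigm_def
  by (subst lift_apply[where src = "(F, insert m S)"]) (auto simp: sm_b_def split: if_splits)

lemma jw_sign_singleton [simp]: "jw_sign {m} m = 1"
proof -
  have "{k \<in> {m}. k < m} = {}" by auto
  then show ?thesis unfolding jw_sign_def by (simp only: card.empty power_0)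
qed

lemma jw_sign_empty [simp]: "jw_sign {} m = 1"
  by (simp add: jw_sign_def)

lemma Ham_scale: "Ham M J \<gamma> (\<lambda>b. c * \<psi> b) = (\<lambda>b. c * Ham M J \<gamma> \<psi> b)"
  by (simp add: Ham_def ann_def cre_def sigp_def sigm_def lift_scale sum_distrib_left algebra_simps)

lemma lin_indep_separating_coords:
  assumes "\<And>v. v \<in> A \<Longrightarrow> \<exists>b. v b \<noteq> 0 \<and> (\<forall>w\<in>A. w \<noteq> v \<longrightarrow> w b = 0)"
  shows "lin_indep A"
  unfolding lin_indep_def
proof (intro allI impI ballI)
  fix B c v
  assume h: "finite B \<and> B \<subseteq> A \<and> (\<lambda>b. \<Sum>v\<in>B. c v * v b) = (\<lambda>_. 0)" and v: "v \<in> B"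
  then obtain b where b: "v b \<noteq> 0" "\<forall>w\<in>A. w \<noteq> v \<longrightarrow> w b = 0" using assms by blast
  have "(\<Sum>w\<in>B. c w * w b) = c v * v b + (\<Sum>w\<in>B-{v}. c w * w b)"
    using h v by (simp add: sum.remove)
  also have "(\<Sum>w\<in>B-{v}. c w * w b) = 0"
    using b h by (intro sum.neutral) auto
  finally have "c v * v b = (\<Sum>w\<in>B. c w * w b)" by simp
  also have "\<dots> = 0" using h by (metis (no_types))
  finally show "c v = 0" using b by simp
qed

lemma sum_of_multiples_pair:
  fixes u w :: state and c :: "state \<Rightarrow> complex" and B :: "state set"
  assumes "finite B" "\<forall>v\<in>B. \<exists>a. v = (\<lambda>b. a * u b) \<or> v = (\<lambda>b. a * w b)"
  shows "\<exists>\<alpha> \<beta>. \<forall>b. (\<Sum>v\<in>B. c v * v b) = \<alpha> * u b + \<beta> * w b"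
  using assms
proof (induction B rule: finite_induct)
  case empty
  then show ?case by (intro exI[of _ 0]) simp
next
  case (insert x B)
  then obtain \<alpha> \<beta> where ab: "\<forall>b. (\<Sum>v\<in>B. c v * v b) = \<alpha> * u b + \<beta> * w b" by auto
  obtain a where a: "x = (\<lambda>b. a * u b) \<or> x = (\<lambda>b. a * w b)" using insert by auto
  then show ?case
  proof
    assume x: "x = (\<lambda>b. a * u b)"
    show ?thesis using insert ab x
      by (intro exI[of _ "\<alpha> + c x * a"] exI[of _ \<beta>]) (simp add: algebra_simps)
  next
    assume x: "x = (\<lambda>b. a * w b)"
    show ?thesis using insert ab x
      by (intro exI[of _ \<alpha>] exI[of _ "\<beta> + c x * a"]) (simp add: algebra_simps)
  qed
qed

lemma iterates_scaled_pair:
  fixes H :: "state \<Rightarrow> state"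
  assumes hom: "\<And>c v. H (\<lambda>b. c * v b) = (\<lambda>b. c * H v b)"
    and sq: "H (H \<psi>) = (\<lambda>b. l * \<psi> b)"
  shows "\<exists>a. (H ^^ n) \<psi> = (\<lambda>b. a * \<psi> b) \<or> (H ^^ n) \<psi> = (\<lambda>b. a * H \<psi> b)"
proof (induction n)
  case 0
  show ?case by (intro exI[of _ 1]) simp
next
  case (Suc n)
  then obtain a where "(H ^^ n) \<psi> = (\<lambda>b. a * \<psi> b) \<or> (H ^^ n) \<psi> = (\<lambda>b. a * H \<psi> b)"
    by blast
  then show ?case
  proof
    assume "(H ^^ n) \<psi> = (\<lambda>b. a * \<psi> b)"
    then have "(H ^^ Suc n) \<psi> = (\<lambda>b. a * H \<psi> b)" by (simp add: hom)
    then show ?thesis by blast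
  next
    assume "(H ^^ n) \<psi> = (\<lambda>b. a * H \<psi> b)"
    then have "(H ^^ Suc n) \<psi> = (\<lambda>b. (a * l) * \<psi> b)" by (simp add: hom sq mult.assoc)
    then show ?thesis by blast
  qed
qed

lemma krylov_eq_cspan_pair:
  fixes H :: "state \<Rightarrow> state"
  assumes hom: "\<And>c v. H (\<lambda>b. c * v b) = (\<lambda>b. c * H v b)"
    and sq: "H (H \<psi>) = (\<lambda>b. l * \<psi> b)" and ne: "\<psi> \<noteq> H \<psi>"
  shows "krylov H \<psi> = cspan {\<psi>, H \<psi>}"
proof
  show "krylov H \<psi> \<subseteq> cspan {\<psi>, H \<psi>}"
  proof
    fix \<phi> assume "\<phi> \<in> krylov H \<psi>"
    then obtain B c where B: "finite B" "B \<subseteq> range (\<lambda>n. (H ^^ n) \<psi>)" "\<phi> = (\<lambda>b. \<Sum>v\<in>B. c v * v b)"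
      unfolding krylov_def cspan_def by blast
    then have "\<forall>v\<in>B. \<exists>a. v = (\<lambda>b. a * \<psi> b) \<or> v = (\<lambda>b. a * H \<psi> b)"
      using iterates_scaled_pair[OF hom sq] by blast
    then obtain \<alpha> \<beta> where ab: "\<forall>b. (\<Sum>v\<in>B. c v * v b) = \<alpha> * \<psi> b + \<beta> * H \<psi> b"
      using sum_of_multiples_pair[OF B(1)] by blast
    define c' where "c' x = (if x = \<psi> then \<alpha> else \<beta>)" for x :: state
    have "\<phi> = (\<lambda>b. \<Sum>x\<in>{\<psi>, H \<psi>}. c' x * x b)"
      using ab ne by (auto simp: B(3) c'_def fun_eq_iff)
    then show "\<phi> \<in> cspan {\<psi>, H \<psi>}"
      unfolding cspan_def by (intro CollectI exI[of _ "{\<psi>, H \<psi>}"] exI[of _ c']) simp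
  qed
next
  have pair: "{\<psi>, H \<psi>} \<subseteq> range (\<lambda>n. (H ^^ n) \<psi>)"
    using rangeI[of "\<lambda>n. (H ^^ n) \<psi>" 0] rangeI[of "\<lambda>n. (H ^^ n) \<psi>" 1] by auto
  show "cspan {\<psi>, H \<psi>} \<subseteq> krylov H \<psi>"
  proof
    fix \<phi> assume "\<phi> \<in> cspan {\<psi>, H \<psi>}"
    then obtain B c where "finite B" "B \<subseteq> {\<psi>, H \<psi>}" "\<phi> = (\<lambda>b. \<Sum>v\<in>B. c v * v b)"
      unfolding cspan_def by blast
    then show "\<phi> \<in> krylov H \<psi>"
      unfolding krylov_def cspan_def using pair by (intro CollectI exI[of _ B] exI[of _ c]) auto
  qed
qed

lemma two_dim_krylov:
  fixes H :: "state \<Rightarrow> state"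
  assumes hom: "\<And>c v. H (\<lambda>b. c * v b) = (\<lambda>b. c * H v b)"
    and sq: "H (H \<psi>) = (\<lambda>b. l * \<psi> b)" and "l \<noteq> 0" and "\<psi> \<noteq> (\<lambda>_. 0)"
    and disjoint: "\<And>b. \<psi> b = 0 \<or> H \<psi> b = 0"
  shows "card {\<psi>, H \<psi>} = 2 \<and> lin_indep {\<psi>, H \<psi>} \<and> krylov H \<psi> = cspan {\<psi>, H \<psi>}"
proof -
  obtain b0 where b0: "\<psi> b0 \<noteq> 0" "H \<psi> b0 = 0"
    using \<open>\<psi> \<noteq> (\<lambda>_. 0)\<close> disjoint by fastforce
  have "H \<psi> \<noteq> (\<lambda>_. 0)"
  proof
    assume "H \<psi> = (\<lambda>_. 0)"
    then have "H (H \<psi>) = (\<lambda>_. 0)"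
      using hom[of 0 "\<lambda>_. 0"] by simp
    then show False
      using sq b0(1) \<open>l \<noteq> 0\<close> by (metis mult_eq_0_iff)
  qed
  then obtain b1 where b1: "H \<psi> b1 \<noteq> 0" "\<psi> b1 = 0"
    using disjoint by fastforce
  have ne: "\<psi> \<noteq> H \<psi>"
    using b0 by auto
  have "lin_indep {\<psi>, H \<psi>}"
  proof (rule lin_indep_separating_coords)
    fix v assume "v \<in> {\<psi>, H \<psi>}"
    then show "\<exists>b. v b \<noteq> 0 \<and> (\<forall>w\<in>{\<psi>, H \<psi>}. w \<noteq> v \<longrightarrow> w b = 0)"
      using b0 b1 by blast
  qed
  then show ?thesis
    using ne krylov_eq_cspan_pair[OF hom sq ne] by simp
qed

definition one_particle :: "(nat \<Rightarrow> nat set \<Rightarrow> complex) \<Rightarrow> state" where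
  "one_particle \<Phi> = (\<lambda>(F, S). if \<exists>q. F = {q} then \<Phi> (the_elem F) S else 0)"

(* Ham only sees configurations inside the chain, so the reduction to one_particle_ham below
   needs wavefunctions supported there. *)
definition confined :: "nat \<Rightarrow> (nat \<Rightarrow> nat set \<Rightarrow> complex) \<Rightarrow> bool" where
  "confined M \<Phi> \<longleftrightarrow> (\<forall>q S. \<Phi> q S \<noteq> 0 \<longrightarrow> q \<in> {1..M} \<and> S \<subseteq> {1..M})"

lemma one_particle_singleton [simp]: "one_particle \<Phi> ({q}, S) = \<Phi> q S"
  by (simp add: one_particle_def)

lemma one_particle_apply:
  "one_particle \<Phi> (F, S) = (if \<exists>q. F = {q} then \<Phi> (the_elem F) S else 0)"
  by (simp add: one_particle_def)

lemma one_particle_scale: "one_particle (\<lambda>q S. c * \<Phi> q S) = (\<lambda>b. c * one_particle \<Phi> b)"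
  by (simp add: one_particle_def fun_eq_iff split: prod.split)

lemma confinedD: "confined M \<Phi> \<Longrightarrow> \<Phi> q S \<noteq> 0 \<Longrightarrow> q \<in> {1..M} \<and> S \<subseteq> {1..M}"
  by (auto simp: confined_def)

lemma confined_move:
  "confined M \<Phi> \<Longrightarrow> m' \<in> {1..M} \<Longrightarrow> confined M (\<lambda>q S. if q = m' then \<Phi> m S else 0)"
  by (auto simp: confined_def)

lemma confined_raise:
  assumes "confined M \<Phi>" "j \<in> {1..M}"
  shows "confined M (\<lambda>q S. if j \<in> S then \<Phi> q (S - {j}) else 0)"
proof (unfold confined_def, intro allI impI)
  fix q S
  assume "(if j \<in> S then \<Phi> q (S - {j}) else 0) \<noteq> 0"
  then have "j \<in> S" "\<Phi> q (S - {j}) \<noteq> 0" by (auto split: if_splits)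
  then show "q \<in> {1..M} \<and> S \<subseteq> {1..M}"
    using confinedD[OF assms(1)] assms(2) by blast
qed

lemma cre_ann_one_particle:
  assumes "confined M \<Phi>" "m \<noteq> m'" "m' \<in> {1..M}"
  shows "cre M m' (ann M m (one_particle \<Phi>)) = one_particle (\<lambda>q S. if q = m' then \<Phi> m S else 0)"
proof (intro ext, clarify)
  fix F S
  show "cre M m' (ann M m (one_particle \<Phi>)) (F, S)
      = one_particle (\<lambda>q S. if q = m' then \<Phi> m S else 0) (F, S)"
  proof (cases "F = {m'}")
    case True
    then show ?thesis
      using assms confinedD[OF assms(1), of m S] by (auto simp: cre_apply ann_apply mem_configs_iff)
  next
    case False
    have "ann M m (one_particle \<Phi>) (F - {m'}, S) = 0" if "m' \<in> F"
    proof -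
      have "\<not> (\<exists>q. insert m (F - {m'}) = {q})" if "m \<notin> F - {m'}"
        using that \<open>m' \<in> F\<close> False by blast
      then show ?thesis by (simp add: ann_apply one_particle_apply)
    qed
    then have "cre M m' (ann M m (one_particle \<Phi>)) (F, S) = 0"
      by (simp add: cre_apply)
    moreover have "one_particle (\<lambda>q S. if q = m' then \<Phi> m S else 0) (F, S) = 0"
      using False by (cases "\<exists>q. F = {q}") (auto simp: one_particle_apply)
    ultimately show ?thesis by simp
  qed
qed

lemma sigp_one_particle:
  assumes "confined M \<Phi>" "j \<in> {1..M}"
  shows "sigp M j (one_particle \<Phi>) = one_particle (\<lambda>q S. if j \<in> S then \<Phi> q (S - {j}) else 0)"
proof (intro ext, clarify)
  fix F S
  show "sigp M j (one_particle \<Phi>) (F, S)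
      = one_particle (\<lambda>q S. if j \<in> S then \<Phi> q (S - {j}) else 0) (F, S)"
    using assms confinedD[OF assms(1)]
    by (cases "\<exists>q. F = {q}") (auto simp: sigp_apply one_particle_apply mem_configs_iff)
qed

lemma sigm_one_particle:
  assumes "confined M \<Phi>" "j \<in> {1..M}"
  shows "sigm M j (one_particle \<Phi>) = one_particle (\<lambda>q S. if j \<notin> S then \<Phi> q (insert j S) else 0)"
proof (intro ext, clarify)
  fix F S
  show "sigm M j (one_particle \<Phi>) (F, S)
      = one_particle (\<lambda>q S. if j \<notin> S then \<Phi> q (insert j S) else 0) (F, S)"
    using assms confinedD[OF assms(1)]
    by (cases "\<exists>q. F = {q}") (auto simp: sigm_apply one_particle_apply mem_configs_iff)
qed

lemma one_particle_in_sector: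
  assumes "confined M \<Phi>" and "\<And>q S. \<Phi> q S \<noteq> 0 \<Longrightarrow> 1 \<in> S"
  shows "one_particle \<Phi> \<in> sector M"
  unfolding sector_def
proof (intro CollectI allI impI)
  fix F S assume nz: "one_particle \<Phi> (F, S) \<noteq> 0"
  then obtain q where F: "F = {q}" by (auto simp: one_particle_apply split: if_splits)
  then have "\<Phi> q S \<noteq> 0" using nz by simp
  then show "(F, S) \<in> configs M \<and> card F = 1 \<and> 1 \<in> S"
    using F confinedD[OF assms(1)] assms(2) by (auto simp: mem_configs_iff)
qed

(* Spin factor of a hop of the fermion onto site j from j - 1 (hop_right), and of a hop from
   site j to j - 1 (hop_left). *)
definition hop_right :: "real \<Rightarrow> real \<Rightarrow> nat \<Rightarrow> (nat set \<Rightarrow> complex) \<Rightarrow> nat set \<Rightarrow> complex" where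
  "hop_right J \<gamma> j \<chi> S = - of_real \<gamma> * \<chi> S + (if j \<in> S then of_real J * \<chi> (S - {j}) else 0)"

definition hop_left :: "real \<Rightarrow> real \<Rightarrow> nat \<Rightarrow> (nat set \<Rightarrow> complex) \<Rightarrow> nat set \<Rightarrow> complex" where
  "hop_left J \<gamma> j \<chi> S = - of_real \<gamma> * \<chi> S + (if j \<notin> S then of_real J * \<chi> (insert j S) else 0)"

lemma hop_right_zero [simp]: "hop_right J \<gamma> j (\<lambda>_. 0) = (\<lambda>_. 0)"
  and hop_left_zero [simp]: "hop_left J \<gamma> j (\<lambda>_. 0) = (\<lambda>_. 0)"
  by (simp_all add: hop_right_def hop_left_def fun_eq_iff)

definition one_particle_ham :: "nat \<Rightarrow> real \<Rightarrow> real \<Rightarrow>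
    (nat \<Rightarrow> nat set \<Rightarrow> complex) \<Rightarrow> nat \<Rightarrow> nat set \<Rightarrow> complex" where
  "one_particle_ham M J \<gamma> \<Phi> q = (\<lambda>S. if q \<in> {1..M} then
      (if 2 \<le> q then hop_right J \<gamma> q (\<Phi> (q - 1)) S else 0)
    + (if q + 1 \<le> M then hop_left J \<gamma> (q + 1) (\<Phi> (q + 1)) S else 0) else 0)"

lemma one_particle_ham_interior:
  "2 \<le> q \<Longrightarrow> q + 1 \<le> M \<Longrightarrow>
    one_particle_ham M J \<gamma> \<Phi> q S = hop_right J \<gamma> q (\<Phi> (q - 1)) S + hop_left J \<gamma> (q + 1) (\<Phi> (q + 1)) S"
  by (simp add: one_particle_ham_def)

lemma one_particle_ham_outside: "q \<notin> {1..M} \<Longrightarrow> one_particle_ham M J \<gamma> \<Phi> q = (\<lambda>_. 0)"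
  unfolding one_particle_ham_def by (simp only: if_False)

lemma one_particle_ham_confined:
  assumes "confined M \<Phi>"
  shows "confined M (one_particle_ham M J \<gamma> \<Phi>)"
proof (unfold confined_def, intro allI impI)
  fix q S assume nz: "one_particle_ham M J \<gamma> \<Phi> q S \<noteq> 0"
  then have q: "q \<in> {1..M}" by (auto simp: one_particle_ham_def split: if_splits)
  have "S \<subseteq> {1..M}"
  proof (rule ccontr)
    assume "\<not> S \<subseteq> {1..M}"
    then have "\<not> S - {q} \<subseteq> {1..M}" "\<not> insert (q + 1) S \<subseteq> {1..M}"
      using q by auto
    then have "\<Phi> p S = 0" "\<Phi> p (S - {q}) = 0" "\<Phi> p (insert (q + 1) S) = 0" for p
      using confinedD[OF assms] \<open>\<not> S \<subseteq> {1..M}\<close> by blast+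
    then have "one_particle_ham M J \<gamma> \<Phi> q S = 0"
      by (simp add: one_particle_ham_def hop_right_def hop_left_def)
    with nz show False by simp
  qed
  with q show "q \<in> {1..M} \<and> S \<subseteq> {1..M}" by blast
qed

lemma sum_neighbour_terms:
  fixes q M :: nat
  shows "(\<Sum>m\<in>{1..M-1}. (if q = m + 1 then f (m + 1) m else 0) + (if q = m then g m else 0))
    = (if q \<in> {1..M} then (if 2 \<le> q then f q (q - 1) else 0) + (if q + 1 \<le> M then g q else 0) else 0)"
proof -
  have shifted: "(\<Sum>m\<in>A. if q = m + 1 then f (m + 1) m else 0)
      = (if q \<noteq> 0 \<and> q - 1 \<in> A then f q (q - 1) else 0)"
    if "finite A" for A
    using that by (cases q) (simp_all add: sum.delta')
  show ?thesis
    unfolding sum.distrib shifted[OF finite_atLeastAtMost] sum.delta'[OF finite_atLeastAtMost]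
    by (cases q) auto
qed

lemma Ham_one_particle:
  assumes "confined M \<Phi>"
  shows "Ham M J \<gamma> (one_particle \<Phi>) = one_particle (one_particle_ham M J \<gamma> \<Phi>)"
proof (intro ext, clarify)
  fix F S
  define \<Psi> where "\<Psi> m q S = (if q = m + 1 then hop_right J \<gamma> (m + 1) (\<Phi> m) S else 0)
    + (if q = m then hop_left J \<gamma> (m + 1) (\<Phi> (m + 1)) S else 0)" for m q S
  have "Ham M J \<gamma> (one_particle \<Phi>) (F, S) = (\<Sum>m\<in>{1..M-1}. one_particle (\<Psi> m) (F, S))"
    unfolding Ham_def
  proof (intro sum.cong refl)
    fix m assume "m \<in> {1..M-1}"
    then have m: "m \<in> {1..M}" "m + 1 \<in> {1..M}" by auto
    show "of_real J * cre M (m + 1) (ann M m (sigp M (m + 1) (one_particle \<Phi>))) (F, S)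
        + of_real J * sigm M (m + 1) (cre M m (ann M (m + 1) (one_particle \<Phi>))) (F, S)
        - of_real \<gamma> * (cre M (m + 1) (ann M m (one_particle \<Phi>)) (F, S)
                       + cre M m (ann M (m + 1) (one_particle \<Phi>)) (F, S))
        = one_particle (\<Psi> m) (F, S)"
      using m
      by (simp add: sigp_one_particle sigm_one_particle cre_ann_one_particle
          confined_move confined_raise assms one_particle_apply \<Psi>_def hop_right_def hop_left_def
          algebra_simps)
  qed
  also have "\<dots> = one_particle (one_particle_ham M J \<gamma> \<Phi>) (F, S)"
  proof (cases "\<exists>q. F = {q}")
    case True
    then obtain q where q: "F = {q}" by blast
    have "(\<Sum>m\<in>{1..M-1}. \<Psi> m q S) = one_particle_ham M J \<gamma> \<Phi> q S"
      unfolding \<Psi>_def sum_neighbour_terms[where f = "\<lambda>j i. hop_right J \<gamma> j (\<Phi> i) S"]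
      by (simp add: one_particle_ham_def)
    then show ?thesis using q by simp
  qed (simp add: one_particle_apply)
  finally show "Ham M J \<gamma> (one_particle \<Phi>) (F, S) = one_particle (one_particle_ham M J \<gamma> \<Phi>) (F, S)" .
qed

definition blocks :: "nat \<Rightarrow> (nat \<Rightarrow> nat set \<Rightarrow> complex) \<Rightarrow> nat \<Rightarrow> nat set \<Rightarrow> complex" where
  "blocks Z \<phi> q = (if q mod 4 = 2 \<and> q div 4 \<le> Z then \<phi> (q div 4) else (\<lambda>_. 0))"

lemma blocks_at:
  assumes "k \<le> Z"
  shows "blocks Z \<phi> (4 * k + 2) = \<phi> k"
proof -
  have "(4 * k + 2) mod 4 = 2" "(4 * k + 2) div 4 = k" by presburger+
  then show ?thesis
    unfolding blocks_def using assms by simp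
qed

lemma blocks_off: "q mod 4 \<noteq> 2 \<Longrightarrow> blocks Z \<phi> q = (\<lambda>_. 0)"
  by (simp add: blocks_def)

lemma blocks_odd: "odd q \<Longrightarrow> blocks Z \<phi> q = (\<lambda>_. 0)"
  by (rule blocks_off) presburger

lemma one_particle_ham_blocks_even:
  assumes "even q"
  shows "one_particle_ham M J \<gamma> (blocks Z \<phi>) q = (\<lambda>_. 0)"
proof (cases "q = 0")
  case False
  have "odd (q - 1)" "odd (q + 1)"
    using assms False by simp_all
  then show ?thesis
    unfolding one_particle_ham_def blocks_odd[OF \<open>odd (q - 1)\<close>] blocks_odd[OF \<open>odd (q + 1)\<close>]
    by (simp add: fun_eq_iff)
qed (simp add: one_particle_ham_def fun_eq_iff)

lemma one_particle_ham_blocks_left: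
  assumes "k \<le> Z"
  shows "one_particle_ham (4 * Z + 3) J \<gamma> (blocks Z \<phi>) (4 * k + 1) = hop_left J \<gamma> (4 * k + 2) (\<phi> k)"
proof -
  have "4 * k + 1 + 1 = 4 * k + 2" "4 * k + 1 - 1 = 4 * k" by simp_all
  moreover have "(4 * k) mod 4 \<noteq> 2" by presburger
  ultimately show ?thesis
    unfolding one_particle_ham_def using assms
    by (simp only: blocks_at blocks_off not_False_eq_True) (simp add: fun_eq_iff)
qed

lemma one_particle_ham_blocks_right:
  assumes "k \<le> Z"
  shows "one_particle_ham (4 * Z + 3) J \<gamma> (blocks Z \<phi>) (4 * k + 3) = hop_right J \<gamma> (4 * k + 3) (\<phi> k)"
proof -
  have "4 * k + 3 - 1 = 4 * k + 2" "4 * k + 3 + 1 = 4 * k + 4" by simp_all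
  moreover have "(4 * k + 4) mod 4 \<noteq> 2" by presburger
  ultimately show ?thesis
    unfolding one_particle_ham_def using assms
    by (simp only: blocks_at blocks_off not_False_eq_True) (simp add: fun_eq_iff)
qed

lemma one_particle_ham_sq_blocks_site:
  assumes "k \<le> Z"
  shows "one_particle_ham (4 * Z + 3) J \<gamma> (one_particle_ham (4 * Z + 3) J \<gamma> (blocks Z \<phi>)) (4 * k + 2) S
    = hop_right J \<gamma> (4 * k + 2) (hop_left J \<gamma> (4 * k + 2) (\<phi> k)) S
    + hop_left J \<gamma> (4 * k + 3) (hop_right J \<gamma> (4 * k + 3) (\<phi> k)) S"
proof -
  have q: "2 \<le> 4 * k + 2" "4 * k + 2 + 1 \<le> 4 * Z + 3" using assms by simp_all
  have e: "4 * k + 2 - 1 = 4 * k + 1" "4 * k + 2 + 1 = 4 * k + 3" by simp_all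
  show ?thesis
    unfolding one_particle_ham_interior[OF q] e
    by (simp only: one_particle_ham_blocks_left[OF assms] one_particle_ham_blocks_right[OF assms])
qed

lemma one_particle_ham_sq_blocks_gap:
  assumes "k < Z"
  shows "one_particle_ham (4 * Z + 3) J \<gamma> (one_particle_ham (4 * Z + 3) J \<gamma> (blocks Z \<phi>)) (4 * k + 4) S
    = hop_right J \<gamma> (4 * k + 4) (hop_right J \<gamma> (4 * k + 3) (\<phi> k)) S
    + hop_left J \<gamma> (4 * k + 5) (hop_left J \<gamma> (4 * k + 6) (\<phi> (k + 1))) S"
proof -
  have q: "2 \<le> 4 * k + 4" "4 * k + 4 + 1 \<le> 4 * Z + 3" using assms by simp_all
  have k: "k \<le> Z" "k + 1 \<le> Z" using assms by simp_all
  have e: "4 * k + 4 - 1 = 4 * k + 3" "4 * k + 4 + 1 = 4 * (k + 1) + 1" by simp_all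
  have e': "4 * (k + 1) + 1 = 4 * k + 5" "4 * (k + 1) + 2 = 4 * k + 6" by simp_all
  show ?thesis
    unfolding one_particle_ham_interior[OF q] e
    unfolding one_particle_ham_blocks_left[OF k(2)] one_particle_ham_blocks_right[OF k(1)]
    unfolding e' ..
qed

lemma one_particle_ham_sq_blocks:
  assumes block: "\<And>k S. k \<le> Z \<Longrightarrow>
      hop_right J \<gamma> (4 * k + 2) (hop_left J \<gamma> (4 * k + 2) (\<phi> k)) S
    + hop_left J \<gamma> (4 * k + 3) (hop_right J \<gamma> (4 * k + 3) (\<phi> k)) S = c * \<phi> k S"
    and link: "\<And>k S. k < Z \<Longrightarrow>
      hop_right J \<gamma> (4 * k + 4) (hop_right J \<gamma> (4 * k + 3) (\<phi> k)) S
    + hop_left J \<gamma> (4 * k + 5) (hop_left J \<gamma> (4 * k + 6) (\<phi> (k + 1))) S = 0"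
  shows "one_particle_ham (4 * Z + 3) J \<gamma> (one_particle_ham (4 * Z + 3) J \<gamma> (blocks Z \<phi>)) q S
    = c * blocks Z \<phi> q S"
proof -
  let ?H = "one_particle_ham (4 * Z + 3) J \<gamma>"
  consider (odd) "odd q" | (outside) "q = 0 \<or> 4 * Z + 3 < q"
    | (gap) k where "k < Z" "q = 4 * k + 4" | (site) k where "k \<le> Z" "q = 4 * k + 2"
  proof -
    have "odd q \<or> (q = 0 \<or> 4 * Z + 3 < q) \<or> (\<exists>k<Z. q = 4 * k + 4) \<or> (\<exists>k\<le>Z. q = 4 * k + 2)"
      by presburger
    then show ?thesis using that by blast
  qed
  then show ?thesis
  proof cases
    case odd
    then have "even (q - 1)" "even (q + 1)" by simp_all
    then show ?thesis
      unfolding one_particle_ham_def[where \<Phi> = "?H (blocks Z \<phi>)"] blocks_odd[OF odd]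
        one_particle_ham_blocks_even[OF \<open>even (q - 1)\<close>] one_particle_ham_blocks_even[OF \<open>even (q + 1)\<close>]
      by simp
  next
    case outside
    then have "q \<notin> {1..4 * Z + 3}" "blocks Z \<phi> q = (\<lambda>_. 0)"
      by (auto simp: blocks_def)
    then show ?thesis
      by (simp add: one_particle_ham_outside)
  next
    case (gap k)
    have "q mod 4 \<noteq> 2" using gap(2) by presburger
    then show ?thesis
      unfolding gap(2) one_particle_ham_sq_blocks_gap[OF gap(1)] link[OF gap(1)]
      by (simp add: blocks_off)
  next
    case (site k)
    show ?thesis
      unfolding site(2) one_particle_ham_sq_blocks_site[OF site(1)]
        block[OF site(1)] blocks_at[OF site(1)] ..
  qed
qed

definition pair_product :: "nat \<Rightarrow> (nat \<Rightarrow> bool \<Rightarrow> bool \<Rightarrow> complex) \<Rightarrow> nat set \<Rightarrow> complex" where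
  "pair_product N g S = (if 1 \<in> S \<and> S \<subseteq> {1..2 * N + 1}
     then (\<Prod>i<N. g i (2 * i + 2 \<in> S) (2 * i + 3 \<in> S)) else 0)"

lemma pair_product_focus:
  assumes "i < N"
  shows "pair_product N g S = (if 1 \<in> S \<and> S \<subseteq> {1..2 * N + 1}
    then g i (2 * i + 2 \<in> S) (2 * i + 3 \<in> S) * (\<Prod>i'\<in>{..<N} - {i}. g i' (2 * i' + 2 \<in> S) (2 * i' + 3 \<in> S))
    else 0)"
  unfolding pair_product_def using assms by (simp add: prod.remove)

lemma pair_product_support: "pair_product N g S \<noteq> 0 \<Longrightarrow> 1 \<in> S \<and> S \<subseteq> {1..2 * N + 1}"
  by (simp add: pair_product_def split: if_splits)

lemma prod_other_pairs_cong:
  fixes i :: nat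
  assumes "\<And>s. s \<noteq> 2 * i + 2 \<Longrightarrow> s \<noteq> 2 * i + 3 \<Longrightarrow> s \<in> S' \<longleftrightarrow> s \<in> S"
    and "\<And>i'. i' < N \<Longrightarrow> i' \<noteq> i \<Longrightarrow> g' i' = g i'"
  shows "(\<Prod>i'\<in>{..<N} - {i}. g' i' (2 * i' + 2 \<in> S') (2 * i' + 3 \<in> S'))
       = (\<Prod>i'\<in>{..<N} - {i}. g i' (2 * i' + 2 \<in> S) (2 * i' + 3 \<in> S))"
proof (rule prod.cong)
  fix i' assume i': "i' \<in> {..<N} - {i}"
  then have "i' \<noteq> i" "i' < N" by simp_all
  then have "2 * i' + 2 \<noteq> 2 * i + 2" "2 * i' + 2 \<noteq> 2 * i + 3"
    "2 * i' + 3 \<noteq> 2 * i + 2" "2 * i' + 3 \<noteq> 2 * i + 3"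
    by presburger+
  then show "g' i' (2 * i' + 2 \<in> S') (2 * i' + 3 \<in> S') = g i' (2 * i' + 2 \<in> S) (2 * i' + 3 \<in> S)"
    using assms \<open>i' \<noteq> i\<close> \<open>i' < N\<close> by simp
qed simp

lemma pair_product_local_sum:
  assumes "i < N"
    and "\<And>i'. i' < N \<Longrightarrow> i' \<noteq> i \<Longrightarrow> g1 i' = g i'"
    and "\<And>i'. i' < N \<Longrightarrow> i' \<noteq> i \<Longrightarrow> g2 i' = g i'"
    and "\<And>x y. g1 i x y + g2 i x y = c * g i x y"
  shows "pair_product N g1 S + pair_product N g2 S = c * pair_product N g S"
proof -
  let ?R = "\<lambda>g. \<Prod>i'\<in>{..<N} - {i}. g i' (2 * i' + 2 \<in> S) (2 * i' + 3 \<in> S)"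
  have "?R g1 = ?R g" "?R g2 = ?R g"
    by (rule prod_other_pairs_cong; simp add: assms(2,3))+
  then show ?thesis
    unfolding pair_product_focus[OF assms(1)] by (simp add: assms(4) flip: distrib_right)
qed

definition pair_config :: "nat \<Rightarrow> (nat \<Rightarrow> bool) \<Rightarrow> (nat \<Rightarrow> bool) \<Rightarrow> nat set" where
  "pair_config N x y = insert 1 ({2 * i + 2 | i. i < N \<and> x i} \<union> {2 * i + 3 | i. i < N \<and> y i})"

lemma pair_product_pair_config:
  "pair_product N g (pair_config N x y) = (\<Prod>i<N. g i (x i) (y i))"
proof -
  have "2 * i + 2 \<in> pair_config N x y \<longleftrightarrow> x i" "2 * i + 3 \<in> pair_config N x y \<longleftrightarrow> y i"
    if "i < N" for i
  proof -
    have "2 * i + 2 \<noteq> 2 * i' + 3" "2 * i + 3 \<noteq> 2 * i' + 2" for i' :: nat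
      by presburger+
    then show "2 * i + 2 \<in> pair_config N x y \<longleftrightarrow> x i" "2 * i + 3 \<in> pair_config N x y \<longleftrightarrow> y i"
      using that unfolding pair_config_def by auto
  qed
  moreover have "pair_config N x y \<subseteq> {1..2 * N + 1}"
    unfolding pair_config_def by auto
  ultimately show ?thesis
    unfolding pair_product_def by (auto simp: pair_config_def intro!: prod.cong)
qed

definition pair_right1 :: "real \<Rightarrow> real \<Rightarrow> (bool \<Rightarrow> bool \<Rightarrow> complex) \<Rightarrow> bool \<Rightarrow> bool \<Rightarrow> complex" where
  "pair_right1 J \<gamma> f x y = - of_real \<gamma> * f x y + (if x then of_real J * f False y else 0)"

definition pair_right2 :: "real \<Rightarrow> real \<Rightarrow> (bool \<Rightarrow> bool \<Rightarrow> complex) \<Rightarrow> bool \<Rightarrow> bool \<Rightarrow> complex" where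
  "pair_right2 J \<gamma> f x y = - of_real \<gamma> * f x y + (if y then of_real J * f x False else 0)"

definition pair_left1 :: "real \<Rightarrow> real \<Rightarrow> (bool \<Rightarrow> bool \<Rightarrow> complex) \<Rightarrow> bool \<Rightarrow> bool \<Rightarrow> complex" where
  "pair_left1 J \<gamma> f x y = - of_real \<gamma> * f x y + (if \<not> x then of_real J * f True y else 0)"

definition pair_left2 :: "real \<Rightarrow> real \<Rightarrow> (bool \<Rightarrow> bool \<Rightarrow> complex) \<Rightarrow> bool \<Rightarrow> bool \<Rightarrow> complex" where
  "pair_left2 J \<gamma> f x y = - of_real \<gamma> * f x y + (if \<not> y then of_real J * f x True else 0)"

lemma hop_pair_product:
  assumes "i < N"
  shows hop_right_pair_product_fst:
      "hop_right J \<gamma> (2 * i + 2) (pair_product N g) = pair_product N (g(i := pair_right1 J \<gamma> (g i)))"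
    and hop_right_pair_product_snd:
      "hop_right J \<gamma> (2 * i + 3) (pair_product N g) = pair_product N (g(i := pair_right2 J \<gamma> (g i)))"
    and hop_left_pair_product_fst:
      "hop_left J \<gamma> (2 * i + 2) (pair_product N g) = pair_product N (g(i := pair_left1 J \<gamma> (g i)))"
    and hop_left_pair_product_snd:
      "hop_left J \<gamma> (2 * i + 3) (pair_product N g) = pair_product N (g(i := pair_left2 J \<gamma> (g i)))"
proof -
  let ?R = "\<lambda>S. \<Prod>i'\<in>{..<N} - {i}. g i' (2 * i' + 2 \<in> S) (2 * i' + 3 \<in> S)"
  have rest: "?R (S - {j}) = ?R S" "?R (insert j S) = ?R S" if "j = 2 * i + 2 \<or> j = 2 * i + 3" for S j
    using that by (auto intro!: prod_other_pairs_cong)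
  have upd: "pair_product N (g(i := h)) S
      = (if 1 \<in> S \<and> S \<subseteq> {1..2 * N + 1} then h (2 * i + 2 \<in> S) (2 * i + 3 \<in> S) * ?R S else 0)" for h S
    unfolding pair_product_focus[OF assms] by (simp add: prod_other_pairs_cong)
  note focus = pair_product_focus[OF assms, of g]
  show "hop_right J \<gamma> (2 * i + 2) (pair_product N g) = pair_product N (g(i := pair_right1 J \<gamma> (g i)))"
    using assms by (auto simp: fun_eq_iff hop_right_def pair_right1_def focus upd rest algebra_simps)
  show "hop_right J \<gamma> (2 * i + 3) (pair_product N g) = pair_product N (g(i := pair_right2 J \<gamma> (g i)))"
    using assms by (auto simp: fun_eq_iff hop_right_def pair_right2_def focus upd rest algebra_simps)
  show "hop_left J \<gamma> (2 * i + 2) (pair_product N g) = pair_product N (g(i := pair_left1 J \<gamma> (g i)))"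
    using assms by (auto simp: fun_eq_iff hop_left_def pair_left1_def focus upd rest algebra_simps)
  show "hop_left J \<gamma> (2 * i + 3) (pair_product N g) = pair_product N (g(i := pair_left2 J \<gamma> (g i)))"
    using assms by (auto simp: fun_eq_iff hop_left_def pair_left2_def focus upd rest algebra_simps)
qed

definition block_state1 :: "bool \<Rightarrow> bool \<Rightarrow> complex" where
  "block_state1 x y = (if x = y then (if x then -1 else 1) else 0)"

definition block_state2 :: "real \<Rightarrow> real \<Rightarrow> bool \<Rightarrow> bool \<Rightarrow> complex" where
  "block_state2 J \<gamma> x y = (if x then (if y then 0 else - of_real \<gamma>)
      else (if y then of_real \<gamma> else - of_real J))"

lemma block_state_eigen:
  assumes "v = block_state1 \<or> v = block_state2 J \<gamma>"
  shows "pair_right1 J \<gamma> (pair_left1 J \<gamma> v) x y + pair_left2 J \<gamma> (pair_right2 J \<gamma> v) x y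
    = of_real (2 * \<gamma>^2 + J^2) * v x y"
  using assms
  by (cases x; cases y; elim disjE)
    (simp_all add: pair_right1_def pair_right2_def pair_left1_def pair_left2_def
      block_state1_def block_state2_def power2_eq_square algebra_simps)

definition pair_left2_inv :: "real \<Rightarrow> real \<Rightarrow> (bool \<Rightarrow> bool \<Rightarrow> complex) \<Rightarrow> bool \<Rightarrow> bool \<Rightarrow> complex" where
  "pair_left2_inv J \<gamma> f x y = - (f x y + (if \<not> y then (of_real J
      / of_real \<gamma>) * f x True else 0)) / of_real \<gamma>"

lemma pair_left2_pair_left2_inv:
  "\<gamma> \<noteq> 0 \<Longrightarrow> pair_left2 J \<gamma> (pair_left2_inv J \<gamma> f) x y = f x y"
  by (cases y) (simp_all add: pair_left2_def pair_left2_inv_def field_simps)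

lemma pair_left2_uminus:
  "pair_left2 J \<gamma> (\<lambda>x y. - f x y) x y = - pair_left2 J \<gamma> f x y"
  by (simp add: pair_left2_def)

definition pair_basis :: "nat set \<Rightarrow> nat \<Rightarrow> bool \<Rightarrow> bool \<Rightarrow> complex" where
  "pair_basis T i x y = (if x = (2 * i + 2 \<in> T) \<and> y = (2 * i + 3 \<in> T) then 1 else 0)"

definition block_state :: "real \<Rightarrow> real \<Rightarrow> nat set \<Rightarrow> nat \<Rightarrow> bool \<Rightarrow> bool \<Rightarrow> complex" where
  "block_state J \<gamma> T i = (if 2 * i + 2 \<in> T then block_state1 else block_state2 J \<gamma>)"

(* Factors of spin pair i while the fermion sits to its right (left_factor) or to its left
   (right_factor).  On the odd pairs they are matched so that the two contributions at the gap
   site between consecutive fermion sites cancel (ansatz_link). *)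
definition left_factor :: "real \<Rightarrow> real \<Rightarrow> nat set \<Rightarrow> nat \<Rightarrow> bool \<Rightarrow> bool \<Rightarrow> complex" where
  "left_factor J \<gamma> T i = (if even i then pair_right2 J \<gamma> (block_state J \<gamma> T i)
     else (\<lambda>x y. - pair_left2_inv J \<gamma> (pair_right1 J \<gamma> (pair_basis T i)) x y))"

definition right_factor :: "real \<Rightarrow> real \<Rightarrow> nat set \<Rightarrow> nat \<Rightarrow> bool \<Rightarrow> bool \<Rightarrow> complex" where
  "right_factor J \<gamma> T i = (if even i then pair_left1 J \<gamma> (block_state J \<gamma> T i) else pair_basis T i)"

definition ansatz_factor :: "real \<Rightarrow> real \<Rightarrow> nat set \<Rightarrow> nat \<Rightarrow> nat \<Rightarrow> bool \<Rightarrow> bool \<Rightarrow> complex" where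
  "ansatz_factor J \<gamma> T k i = (if i < 2 * k then left_factor J \<gamma> T i
     else if i = 2 * k then block_state J \<gamma> T i else right_factor J \<gamma> T i)"

definition ansatz :: "nat \<Rightarrow> real \<Rightarrow> real \<Rightarrow> nat set \<Rightarrow> nat \<Rightarrow> nat set \<Rightarrow> complex" where
  "ansatz Z J \<gamma> T = blocks Z (\<lambda>k. pair_product (2 * Z + 1) (ansatz_factor J \<gamma> T k))"

lemma ansatz_confined: "confined (4 * Z + 3) (ansatz Z J \<gamma> T)"
proof (unfold confined_def, intro allI impI)
  fix q S assume nz: "ansatz Z J \<gamma> T q S \<noteq> 0"
  then have q: "q mod 4 = 2" "q div 4 \<le> Z"
    by (auto simp: ansatz_def blocks_def split: if_splits)
  then have "q \<in> {1..4 * Z + 3}" by auto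
  moreover have "S \<subseteq> {1..4 * Z + 3}"
    using pair_product_support nz q by (fastforce simp: ansatz_def blocks_def)
  ultimately show "q \<in> {1..4 * Z + 3} \<and> S \<subseteq> {1..4 * Z + 3}" by blast
qed

lemma ansatz_in_sector: "one_particle (ansatz Z J \<gamma> T) \<in> sector (4 * Z + 3)"
proof (rule one_particle_in_sector[OF ansatz_confined])
  fix q S assume "ansatz Z J \<gamma> T q S \<noteq> 0"
  then show "1 \<in> S"
    using pair_product_support by (auto simp: ansatz_def blocks_def split: if_splits)
qed

lemma ansatz_block:
  assumes "k \<le> Z"
  shows "hop_right J \<gamma> (4 * k + 2) (hop_left J \<gamma> (4 * k + 2)
        (pair_product (2 * Z + 1) (ansatz_factor J \<gamma> T k))) S
    + hop_left J \<gamma> (4 * k + 3) (hop_right J \<gamma> (4 * k + 3)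
        (pair_product (2 * Z + 1) (ansatz_factor J \<gamma> T k))) S
    = of_real (2 * \<gamma>^2 + J^2) * pair_product (2 * Z + 1) (ansatz_factor J \<gamma> T k) S"
proof -
  let ?g = "ansatz_factor J \<gamma> T k"
  have i: "2 * k < 2 * Z + 1" using assms by simp
  have e: "4 * k + 2 = 2 * (2 * k) + 2" "4 * k + 3 = 2 * (2 * k) + 3" by simp_all
  show ?thesis
    unfolding e hop_left_pair_product_fst[OF i] hop_right_pair_product_fst[OF i]
      hop_right_pair_product_snd[OF i] hop_left_pair_product_snd[OF i]
    by (rule pair_product_local_sum[OF i]) (simp_all add: ansatz_factor_def block_state_def block_state_eigen)
qed

lemma ansatz_link:
  assumes "k < Z" and "\<gamma> \<noteq> 0"
  shows "hop_right J \<gamma> (4 * k + 4) (hop_right J \<gamma> (4 * k + 3)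
        (pair_product (2 * Z + 1) (ansatz_factor J \<gamma> T k))) S
    + hop_left J \<gamma> (4 * k + 5) (hop_left J \<gamma> (4 * k + 6)
        (pair_product (2 * Z + 1) (ansatz_factor J \<gamma> T (k + 1)))) S
    = 0"
proof -
  let ?g = "ansatz_factor J \<gamma> T k" and ?g' = "ansatz_factor J \<gamma> T (k + 1)"
  have i: "2 * k < 2 * Z + 1" "2 * k + 1 < 2 * Z + 1" "2 * k + 2 < 2 * Z + 1" using assms by simp_all
  have e: "4 * k + 3 = 2 * (2 * k) + 3" "4 * k + 4 = 2 * (2 * k + 1) + 2"
    "4 * k + 5 = 2 * (2 * k + 1) + 3" "4 * k + 6 = 2 * (2 * k + 2) + 2" by simp_all
  define g1 where "g1 = ?g(2 * k := pair_right2 J \<gamma> (?g (2 * k)),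
      2 * k + 1 := pair_right1 J \<gamma> (?g (2 * k + 1)))"
  define g2 where "g2 = ?g'(2 * k + 2 := pair_left1 J \<gamma> (?g' (2 * k + 2)),
      2 * k + 1 := pair_left2 J \<gamma> (?g' (2 * k + 1)))"
  have "pair_product (2 * Z + 1) g1 S + pair_product (2 * Z + 1) g2 S = 0 * pair_product (2 * Z + 1) g1 S"
  proof (rule pair_product_local_sum[OF i(2)])
    fix i' assume "i' \<noteq> 2 * k + 1"
    then show "g2 i' = g1 i'"
      by (auto simp: g1_def g2_def ansatz_factor_def left_factor_def right_factor_def)
  next
    fix x y
    show "g1 (2 * k + 1) x y + g2 (2 * k + 1) x y = 0 * g1 (2 * k + 1) x y"
      using assms(2)
      by (simp add: g1_def g2_def ansatz_factor_def left_factor_def right_factor_def pair_left2_uminus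
          pair_left2_pair_left2_inv)
  qed simp
  then show ?thesis
    unfolding e hop_right_pair_product_snd[OF i(1)] hop_right_pair_product_fst[OF i(2)]
      hop_left_pair_product_fst[OF i(3)] hop_left_pair_product_snd[OF i(2)]
    by (simp add: g1_def g2_def)
qed

lemma ansatz_eigen:
  assumes "\<gamma> \<noteq> 0"
  shows "Ham (4 * Z + 3) J \<gamma> (Ham (4 * Z + 3) J \<gamma> (one_particle (ansatz Z J \<gamma> T)))
    = (\<lambda>b. of_real (2 * \<gamma>^2 + J^2) * one_particle (ansatz Z J \<gamma> T) b)"
proof -
  have "one_particle_ham (4 * Z + 3) J \<gamma> (one_particle_ham (4 * Z + 3) J \<gamma> (ansatz Z J \<gamma> T))
      = (\<lambda>q S. of_real (2 * \<gamma>^2 + J^2) * ansatz Z J \<gamma> T q S)"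
    unfolding ansatz_def
    by (intro ext one_particle_ham_sq_blocks ansatz_block ansatz_link assms) simp_all
  then show ?thesis
    by (simp add: Ham_one_particle ansatz_confined one_particle_ham_confined one_particle_scale)
qed

lemma ansatz_Ham_disjoint_support:
  "one_particle (ansatz Z J \<gamma> T) b = 0 \<or> Ham (4 * Z + 3) J \<gamma> (one_particle (ansatz Z J \<gamma> T)) b = 0"
proof -
  obtain F S where b: "b = (F, S)" by (cases b)
  have H: "Ham (4 * Z + 3) J \<gamma> (one_particle (ansatz Z J \<gamma> T))
      = one_particle (one_particle_ham (4 * Z + 3) J \<gamma> (ansatz Z J \<gamma> T))"
    by (rule Ham_one_particle[OF ansatz_confined])
  show ?thesis
  proof (cases "\<exists>q. F = {q}")
    case True
    then obtain q where q: "F = {q}" by blast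
    show ?thesis
    proof (cases "even q")
      case True
      then have "one_particle_ham (4 * Z + 3) J \<gamma> (ansatz Z J \<gamma> T) q = (\<lambda>_. 0)"
        unfolding ansatz_def by (rule one_particle_ham_blocks_even)
      then show ?thesis by (simp add: b q H)
    next
      case False
      then have "ansatz Z J \<gamma> T q = (\<lambda>_. 0)"
        unfolding ansatz_def by (intro blocks_odd) simp
      then show ?thesis by (simp add: b q)
    qed
  qed (simp add: b one_particle_apply)
qed

(* A set T of label sites encodes one ansatz state: 4k + 2 in T selects block_state1 at the
   fermion site 4k + 2, and T restricted to a gap pair (4j, 4j + 1) selects its basis state. *)
definition label_sites :: "nat \<Rightarrow> nat set" where
  "label_sites Z = (\<lambda>i. 2 * i + 2) ` {..<2 * Z + 1} \<union> (\<lambda>j. 4 * j + 5) ` {..<Z}"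

lemma finite_label_sites: "finite (label_sites Z)"
  by (simp add: label_sites_def)

lemma card_label_sites: "card (label_sites Z) = 3 * Z + 1"
proof -
  have "2 * i + 2 \<noteq> 4 * j + 5" for i j :: nat
    by presburger
  then have "(\<lambda>i. 2 * i + 2) ` {..<2 * Z + 1} \<inter> (\<lambda>j. 4 * j + 5) ` {..<Z} = {}"
    by blast
  moreover have "inj (\<lambda>i::nat. 2 * i + 2)" "inj (\<lambda>j::nat. 4 * j + 5)"
    by (auto intro: injI)
  ultimately show ?thesis
    unfolding label_sites_def
    by (simp add: card_Un_disjoint card_image inj_on_subset)
qed

lemma label_sites_eqI:
  assumes "T \<subseteq> label_sites Z" "T' \<subseteq> label_sites Z"
    and agree: "\<forall>i<2 * Z + 1. (2 * i + 2 \<in> T \<longleftrightarrow> 2 * i + 2 \<in> T')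
      \<and> (odd i \<longrightarrow> (2 * i + 3 \<in> T \<longleftrightarrow> 2 * i + 3 \<in> T'))"
  shows "T = T'"
proof -
  have "s \<in> T \<longleftrightarrow> s \<in> T'" if s: "s \<in> label_sites Z" for s
  proof -
    have "4 * j + 5 = 2 * (2 * j + 1) + 3" for j :: nat by simp
    then consider i where "i < 2 * Z + 1" "s = 2 * i + 2" | j where "j < Z" "s = 2 * (2 * j + 1) + 3"
      using s unfolding label_sites_def by auto
    then show ?thesis
    proof cases
      case (2 j)
      then show ?thesis using agree[rule_format, of "2 * j + 1"] by simp
    qed (use agree in blast)
  qed
  then show ?thesis using assms(1,2) by blast
qed

definition witness_config :: "nat \<Rightarrow> nat set \<Rightarrow> nat set" where
  "witness_config Z T = pair_config (2 * Z + 1) (\<lambda>i. even i \<or> 2 * i + 2 \<in> T)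
     (\<lambda>i. if even i then 2 * i + 2 \<in> T else 2 * i + 3 \<in> T)"

lemma ansatz_factor_at_witness:
  assumes "\<gamma> \<noteq> 0"
  shows "ansatz_factor J \<gamma> T' 0 i (even i \<or> 2 * i + 2 \<in> T)
      (if even i then 2 * i + 2 \<in> T else 2 * i + 3 \<in> T) \<noteq> 0
    \<longleftrightarrow> (2 * i + 2 \<in> T \<longleftrightarrow> 2 * i + 2 \<in> T') \<and> (odd i \<longrightarrow> (2 * i + 3 \<in> T \<longleftrightarrow> 2 * i + 3 \<in> T'))"
  using assms
  by (cases "i = 0"; cases "even i")
    (simp_all add: ansatz_factor_def right_factor_def block_state_def block_state1_def block_state2_def
      pair_left1_def pair_basis_def)

lemma ansatz_witness_iff:
  assumes "\<gamma> \<noteq> 0" "T \<subseteq> label_sites Z" "T' \<subseteq> label_sites Z"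
  shows "one_particle (ansatz Z J \<gamma> T') ({2}, witness_config Z T) \<noteq> 0 \<longleftrightarrow> T' = T"
proof -
  let ?f = "\<lambda>i. ansatz_factor J \<gamma> T' 0 i (even i \<or> 2 * i + 2 \<in> T)
    (if even i then 2 * i + 2 \<in> T else 2 * i + 3 \<in> T)"
  have "ansatz Z J \<gamma> T' 2 = pair_product (2 * Z + 1) (ansatz_factor J \<gamma> T' 0)"
    unfolding ansatz_def by (rule blocks_at[of 0, unfolded mult_0_right add_0]) simp
  then have at_witness: "one_particle (ansatz Z J \<gamma> T') ({2}, witness_config Z T) = (\<Prod>i<2 * Z + 1. ?f i)"
    by (simp only: one_particle_singleton witness_config_def pair_product_pair_config)
  have "(\<Prod>i<2 * Z + 1. ?f i) \<noteq> 0 \<longleftrightarrow> (\<forall>i<2 * Z + 1. ?f i \<noteq> 0)"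
    by (simp only: prod_zero_iff[OF finite_lessThan] lessThan_iff Bex_def) blast
  also have "\<dots> \<longleftrightarrow> (\<forall>i<2 * Z + 1. (2 * i + 2 \<in> T \<longleftrightarrow> 2 * i + 2 \<in> T')
      \<and> (odd i \<longrightarrow> (2 * i + 3 \<in> T \<longleftrightarrow> 2 * i + 3 \<in> T')))"
    by (simp only: ansatz_factor_at_witness[OF assms(1)])
  finally show ?thesis
    unfolding at_witness using label_sites_eqI[OF assms(2,3)] by auto
qed

lemma ansatz_two_dim_krylov:
  fixes Z :: nat and J \<gamma> :: real and T :: "nat set"
  assumes "\<gamma> \<noteq> 0" and "T \<subseteq> label_sites Z"
  defines "\<psi> \<equiv> one_particle (ansatz Z J \<gamma> T)" and "H \<equiv> Ham (4 * Z + 3) J \<gamma>"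
  shows "H (H \<psi>) = (\<lambda>b. complex_of_real (2 * \<gamma>^2 + J^2) * \<psi> b)
    \<and> card {\<psi>, H \<psi>} = 2 \<and> lin_indep {\<psi>, H \<psi>} \<and> krylov H \<psi> = cspan {\<psi>, H \<psi>}"
proof -
  have eigen: "H (H \<psi>) = (\<lambda>b. complex_of_real (2 * \<gamma>^2 + J^2) * \<psi> b)"
    unfolding H_def \<psi>_def by (rule ansatz_eigen[OF assms(1)])
  have "2 * \<gamma>^2 + J^2 > 0"
    using assms(1) by (simp add: add_pos_nonneg)
  then have eigenvalue: "complex_of_real (2 * \<gamma>^2 + J^2) \<noteq> 0"
    unfolding of_real_eq_0_iff by linarith
  have nonzero: "\<psi> \<noteq> (\<lambda>_. 0)"
  proof
    assume "\<psi> = (\<lambda>_. 0)"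
    then show False
      using ansatz_witness_iff[OF assms(1,2,2), of J] unfolding \<psi>_def by simp
  qed
  have homogeneous: "\<And>c v. H (\<lambda>b. c * v b) = (\<lambda>b. c * H v b)"
    unfolding H_def by (rule Ham_scale)
  have disjoint: "\<And>b. \<psi> b = 0 \<or> H \<psi> b = 0"
    unfolding H_def \<psi>_def by (rule ansatz_Ham_disjoint_support)
  show ?thesis
    using eigen two_dim_krylov[of H \<psi>, OF homogeneous eigen eigenvalue nonzero disjoint] by blast
qed

theorem mainTheorem3:
  fixes Z :: nat and J \<gamma> :: real
  assumes "Z \<ge> 1" and "\<gamma> \<noteq> 0"
  defines "M \<equiv> 4 * Z + 3"
  shows "\<exists>A. finite A \<and> card A \<ge> 2 ^ (3 * Z + 1) \<and> A \<subseteq> sector M \<and> lin_indep A \<and>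
    (\<forall>\<psi>\<in>A. Ham M J \<gamma> (Ham M J \<gamma> \<psi>) = (\<lambda>b. complex_of_real (2 * \<gamma>^2 + J^2) * \<psi> b)
       \<and> card {\<psi>, Ham M J \<gamma> \<psi>} = 2 \<and> lin_indep {\<psi>, Ham M J \<gamma> \<psi>}
       \<and> krylov (Ham M J \<gamma>) \<psi> = cspan {\<psi>, Ham M J \<gamma> \<psi>})"
proof -
  define \<psi> where "\<psi> T = one_particle (ansatz Z J \<gamma> T)" for T
  define A where "A = \<psi> ` Pow (label_sites Z)"
  have witness: "\<psi> T' ({2}, witness_config Z T) \<noteq> 0 \<longleftrightarrow> T' = T"
    if "T \<subseteq> label_sites Z" "T' \<subseteq> label_sites Z" for T T'
    unfolding \<psi>_def using ansatz_witness_iff[OF assms(2) that] .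
  have "inj_on \<psi> (Pow (label_sites Z))"
    by (rule inj_onI) (metis witness PowD)
  then have "card A = 2 ^ (3 * Z + 1)"
    unfolding A_def by (simp add: card_image card_Pow finite_label_sites card_label_sites)
  moreover have "lin_indep A"
  proof (rule lin_indep_separating_coords)
    fix v assume "v \<in> A"
    then obtain T where "T \<subseteq> label_sites Z" "v = \<psi> T" unfolding A_def by blast
    then show "\<exists>b. v b \<noteq> 0 \<and> (\<forall>w\<in>A. w \<noteq> v \<longrightarrow> w b = 0)"
      using witness unfolding A_def by blast
  qed
  moreover have "A \<subseteq> sector M"
    unfolding A_def \<psi>_def M_def using ansatz_in_sector by blast
  ultimately show ?thesis
    using ansatz_two_dim_krylov[OF assms(2)] finite_label_sites
    unfolding A_def \<psi>_def M_def by (intro exI[of _ A]) (auto simp: A_def \<psi>_def)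
qed

end
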